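(* Let $\mathbb{F}$ be a field and let $n>4$ be an integer. If $\mathcal{A}$ is a unital $\mathbb{F}$-algebra with $\dim\mathcal{A}=n$ and $l(\mathcal{A})>2^{n-3}$, then $l(\mathcal{A})=2^{n-3}+2^{p}$ for some $p\in\{0,\ldots,n-3\}$.
   Context: All algebras are finite-dimensional, unital, not necessarily associative algebras over the field $\mathbb{F}$. For a finite generating set $S$ of an algebra $\mathcal{A}$, a word in $S$ is any product (with any bracketing) of finitely many elements of $S$; its length is the number of factors, and $1$ is a word of length $0$. $L_i(S)$ is the linear span of all words in $S$ of length at most $i$. The length of $S$ is $l(S)=\min\{k\ge0: L_k(S)=\mathcal{A}\}$, and $l(\mathcal{A})=\max\{l(S): S\text{ a finite generating set of }\mathcal{A}\}$. *)

theory Defs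
  imports Complex_Main
begin

definition unital_fd_algebra ::
  "('f::field \<Rightarrow> 'a::ab_group_add \<Rightarrow> 'a) \<Rightarrow> ('a \<Rightarrow> 'a \<Rightarrow> 'a) \<Rightarrow> 'a \<Rightarrow> bool" where
  "unital_fd_algebra scl mult e \<longleftrightarrow>
     vector_space scl \<and>
     (\<exists>B. finite B \<and> module.span scl B = UNIV) \<and>
     (\<forall>x y z. mult (x + y) z = mult x z + mult y z) \<and>
     (\<forall>x y z. mult z (x + y) = mult z x + mult z y) \<and>
     (\<forall>c x y. mult (scl c x) y = scl c (mult x y)) \<and>
     (\<forall>c x y. mult x (scl c y) = scl c (mult x y)) \<and>
     (\<forall>x. mult e x = x \<and> mult x e = x)"

text \<open>word mult e S k w: w is a word in S of length k (any bracketing); e is the word of length 0.\<close>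
inductive word :: "('a \<Rightarrow> 'a \<Rightarrow> 'a) \<Rightarrow> 'a \<Rightarrow> 'a set \<Rightarrow> nat \<Rightarrow> 'a \<Rightarrow> bool"
  for mult e S where
  word_unit: "word mult e S 0 e"
| word_gen: "s \<in> S \<Longrightarrow> word mult e S 1 s"
| word_mult: "word mult e S i u \<Longrightarrow> word mult e S j v \<Longrightarrow> 1 \<le> i \<Longrightarrow> 1 \<le> j
      \<Longrightarrow> word mult e S (i + j) (mult u v)"

definition Lspan :: "('f::field \<Rightarrow> 'a::ab_group_add \<Rightarrow> 'a) \<Rightarrow> ('a \<Rightarrow> 'a \<Rightarrow> 'a) \<Rightarrow> 'a
    \<Rightarrow> 'a set \<Rightarrow> nat \<Rightarrow> 'a set" where
  "Lspan scl mult e S i = module.span scl {w. \<exists>j\<le>i. word mult e S j w}"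

definition gen_set :: "('f::field \<Rightarrow> 'a::ab_group_add \<Rightarrow> 'a) \<Rightarrow> ('a \<Rightarrow> 'a \<Rightarrow> 'a) \<Rightarrow> 'a
    \<Rightarrow> 'a set \<Rightarrow> bool" where
  "gen_set scl mult e S \<longleftrightarrow> finite S \<and>
     module.span scl {w. \<exists>j. word mult e S j w} = UNIV"

definition set_length :: "('f::field \<Rightarrow> 'a::ab_group_add \<Rightarrow> 'a) \<Rightarrow> ('a \<Rightarrow> 'a \<Rightarrow> 'a) \<Rightarrow> 'a
    \<Rightarrow> 'a set \<Rightarrow> nat" where
  "set_length scl mult e S = (LEAST k. Lspan scl mult e S k = UNIV)"

definition alg_length :: "('f::field \<Rightarrow> 'a::ab_group_add \<Rightarrow> 'a) \<Rightarrow> ('a \<Rightarrow> 'a \<Rightarrow> 'a) \<Rightarrow> 'a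
    \<Rightarrow> nat" where
  "alg_length scl mult e = Max {set_length scl mult e S | S. gen_set scl mult e S}"

end

theory Submission
  imports Defs
begin

(*
  For a generating set S call k a jump if L_k(S) <> L_(k-1)(S); the length l(S) is the
  largest jump. Since L_i(S) L_j(S) is contained in L_(i+j)(S), a word of length k already
  lies in L_(k-1)(S) unless k = i + j with both i and j jumps. So the jumps form a set J
  of positive integers in which every element x >= 2 is the sum of two elements, and
  counting dimensions along the chain L_0(S) < L_1(S) < ... shows |J| < n.

  For such J let r(x) be the number of elements of J below x. Splitting x = y + z shows
  that x / 2^r(x) is antitone on J, so x <= 2^r(x); a strong induction then shows that
  2^(r-1) < x with r = r(x) forces x = 2^(r-1) + 2^p. Applied to x = l(S), r(x) <= n - 2,
  this is the claim.
*)

definition sum_generated :: "nat set \<Rightarrow> bool" where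
  "sum_generated J \<longleftrightarrow>
     finite J \<and> 0 \<notin> J \<and> (\<forall>x\<in>J. 2 \<le> x \<longrightarrow> (\<exists>y\<in>J. \<exists>z\<in>J. x = y + z))"

definition rank_in :: "nat set \<Rightarrow> nat \<Rightarrow> nat" where
  "rank_in J x = card {j\<in>J. j < x}"

lemma sum_generated_pos: "sum_generated J \<Longrightarrow> x \<in> J \<Longrightarrow> 0 < x"
  unfolding sum_generated_def by (cases x) auto

lemma sum_generated_decompose:
  assumes "sum_generated J" "x \<in> J" "2 \<le> x"
  obtains y z where "y \<in> J" "z \<in> J" "x = y + z" "z \<le> y" "0 < z"
proof -
  obtain y z where yz: "y \<in> J" "z \<in> J" "x = y + z"
    using assms unfolding sum_generated_def by blast
  then have "0 < y" "0 < z" using sum_generated_pos[OF assms(1)] by auto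
  with yz that show ?thesis by (cases "z \<le> y") (auto simp: add.commute)
qed

lemma sum_generated_one_mem:
  assumes "sum_generated J" "J \<noteq> {}" shows "1 \<in> J"
proof -
  have "finite J" using assms(1) unfolding sum_generated_def by blast
  define m where "m = Min J"
  have m: "m \<in> J" "\<And>y. y \<in> J \<Longrightarrow> m \<le> y"
    using \<open>finite J\<close> assms(2) by (simp_all add: m_def)
  have "\<not> 2 \<le> m"
  proof
    assume "2 \<le> m"
    then obtain y z where "y \<in> J" "m = y + z" "0 < z"
      using sum_generated_decompose[OF assms(1) m(1)] by metis
    then show False using m(2)[of y] by simp
  qed
  moreover have "0 < m" using sum_generated_pos[OF assms(1) m(1)] .
  ultimately have "m = 1" by simp
  then show ?thesis using m(1) by simp
qed

lemma rank_in_strict_mono: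
  assumes "finite J" "z \<in> J" "z < y" shows "rank_in J z < rank_in J y"
  unfolding rank_in_def using assms by (intro psubset_card_mono) auto

lemma rank_in_mono:
  assumes "finite J" "z \<le> y" shows "rank_in J z \<le> rank_in J y"
  unfolding rank_in_def using assms by (intro card_mono) auto

lemma rank_in_less_card:
  assumes "finite J" "x \<in> J" shows "rank_in J x < card J"
  unfolding rank_in_def using assms by (intro psubset_card_mono) auto

lemma rank_in_one: "sum_generated J \<Longrightarrow> rank_in J 1 = 0"
  unfolding rank_in_def sum_generated_def by auto

lemma sum_generated_ratio_antitone:
  assumes J: "sum_generated J" and "y \<in> J" "z \<in> J" "z \<le> y"
  shows "y * 2 ^ rank_in J z \<le> z * 2 ^ rank_in J y"
  using assms(2-)
proof (induction y rule: less_induct)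
  case (less y)
  have fin: "finite J" using J unfolding sum_generated_def by blast
  show ?case
  proof (cases "z = y")
    case False
    with less.prems have "z < y" by simp
    moreover have "0 < z" using sum_generated_pos[OF J less.prems(2)] .
    ultimately have "2 \<le> y" by linarith
    then obtain u v where uv: "u \<in> J" "y = u + v" "v \<le> u" "0 < v"
      using sum_generated_decompose[OF J less.prems(1)] by metis
    have "u < y" using uv by simp
    then have ru: "Suc (rank_in J u) \<le> rank_in J y"
      using rank_in_strict_mono[OF fin uv(1)] by (simp add: Suc_le_eq)
    have rz: "Suc (rank_in J z) \<le> rank_in J y"
      using rank_in_strict_mono[OF fin less.prems(2) \<open>z < y\<close>] by simp
    show ?thesis
    proof (cases "z \<le> u")
      case True
      have "y * 2 ^ rank_in J z \<le> 2 * (u * 2 ^ rank_in J z)" using uv by simp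
      also have "\<dots> \<le> 2 * (z * 2 ^ rank_in J u)"
        using less.IH[of u] uv less.prems True by simp
      also have "\<dots> = z * 2 ^ Suc (rank_in J u)" by simp
      also have "\<dots> \<le> z * 2 ^ rank_in J y" using ru by (intro mult_le_mono2 power_increasing) auto
      finally show ?thesis .
    next
      case False
      have "y * 2 ^ rank_in J z \<le> (2 * z) * 2 ^ rank_in J z" using uv False by simp
      also have "\<dots> = z * 2 ^ Suc (rank_in J z)" by simp
      also have "\<dots> \<le> z * 2 ^ rank_in J y" using rz by (intro mult_le_mono2 power_increasing) auto
      finally show ?thesis .
    qed
  qed simp
qed

lemma sum_generated_le_two_power_rank:
  assumes J: "sum_generated J" "x \<in> J" shows "x \<le> 2 ^ rank_in J x"
proof -
  have "1 \<in> J" using sum_generated_one_mem[OF J(1)] J(2) by blast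
  moreover have "1 \<le> x" using sum_generated_pos[OF J] by simp
  ultimately show ?thesis
    using sum_generated_ratio_antitone[OF J, of 1] rank_in_one[OF J(1)] by simp
qed

lemma sum_generated_below_two_power:
  assumes J: "sum_generated J" "y \<in> J" "z \<in> J" and "z \<le> y" "y = 2 ^ rank_in J y"
  shows "z = 2 ^ rank_in J z"
proof -
  have "2 ^ rank_in J z \<le> z"
    using sum_generated_ratio_antitone[OF J assms(4)] assms(5)
    by (metis mult.commute mult_le_cancel2 zero_less_power pos2)
  then show ?thesis using sum_generated_le_two_power_rank[OF J(1,3)] by simp
qed

lemma small_summand_bound:
  fixes t p k z :: nat
  assumes "p \<le> t" "2 ^ (t + 2) < 2 ^ (t + 1) + 2 ^ p + z" "z \<le> 2 ^ k" "k < t + 2"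
  shows "k = Suc t" and "2 ^ t < z"
proof -
  have "(2::nat) ^ p \<le> 2 ^ t" using assms(1) by (rule power_increasing) simp
  moreover have "(2::nat) ^ (t + 2) = 4 * 2 ^ t" "(2::nat) ^ (t + 1) = 2 * 2 ^ t" by simp_all
  ultimately show "2 ^ t < z" using assms(2) by linarith
  then have "(2::nat) ^ t < 2 ^ k" using assms(3) by linarith
  then have "t < k" by (rule power_less_imp_less_exp[rotated]) simp
  then show "k = Suc t" using assms(4) by simp
qed

lemma four_two_powers_exceed:
  assumes "p \<le> t" "q \<le> t" "(2::nat) ^ (t + 2) < 2 ^ (t + 1) + 2 ^ p + 2 ^ t + 2 ^ q"
  shows "\<exists>r\<le>t. (2::nat) ^ (t + 1) + 2 ^ p + 2 ^ t + 2 ^ q = 2 ^ (t + 2) + 2 ^ r"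
proof (cases "p = t \<or> q = t")
  case True
  then show ?thesis using assms(1,2) by (auto simp: add.commute)
next
  case False
  then have "2 * 2 ^ p \<le> (2::nat) ^ t" "2 * 2 ^ q \<le> (2::nat) ^ t"
    using assms(1,2) power_increasing[of "Suc p" t "2::nat"] power_increasing[of "Suc q" t "2::nat"]
    by auto
  then show ?thesis using assms(3) by simp
qed

lemma rank_in_large_summand:
  assumes J: "sum_generated J" "y \<in> J" and "y < x" "x \<le> 2 * y"
    and "rank_in J x = Suc r" "2 ^ r < x"
  shows "rank_in J y = r"
proof -
  have fin: "finite J" using J(1) unfolding sum_generated_def by blast
  have "rank_in J y < Suc r" using rank_in_strict_mono[OF fin J(2)] assms(3,5) by metis
  moreover have "r < Suc (rank_in J y)"
  proof -
    have "(2::nat) ^ r < 2 ^ Suc (rank_in J y)"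
      using assms(4,6) sum_generated_le_two_power_rank[OF J] by simp
    then show ?thesis by (rule power_less_imp_less_exp[rotated]) simp
  qed
  ultimately show ?thesis by simp
qed

lemma sum_generated_above_half_power:
  assumes J: "sum_generated J"
  shows "x \<in> J \<Longrightarrow> rank_in J x = Suc r \<Longrightarrow> 2 ^ r < x
    \<Longrightarrow> \<exists>p\<le>r. x = 2 ^ r + 2 ^ p"
proof (induction x arbitrary: r rule: less_induct)
  case (less x)
  have fin: "finite J" using J unfolding sum_generated_def by blast
  have "(1::nat) \<le> 2 ^ r" by simp
  then have "2 \<le> x" using less.prems(3) by linarith
  then obtain y z where yz: "y \<in> J" "z \<in> J" "x = y + z" "z \<le> y" "0 < z"
    using sum_generated_decompose[OF J less.prems(1)] by blast
  define k where "k = rank_in J z"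
  have rank_y: "rank_in J y = r"
    using rank_in_large_summand[OF J yz(1) _ _ less.prems(2,3)] yz by simp
  have y_bound: "y \<le> 2 ^ r" using sum_generated_le_two_power_rank[OF J yz(1)] rank_y by simp
  have z_bound: "z \<le> 2 ^ k" unfolding k_def using sum_generated_le_two_power_rank[OF J yz(2)] .
  have k_le: "k \<le> r" unfolding k_def using rank_in_mono[OF fin yz(4)] rank_y by simp
  show ?case
  proof (cases r)
    case 0
    then have "y = 1" "z = 1" using y_bound yz by auto
    then show ?thesis using yz 0 by auto
  next
    case (Suc s)
    have "2 ^ s < y" using less.prems(3) yz Suc by simp
    then obtain p where p: "p \<le> s" "y = 2 ^ s + 2 ^ p"
      using less.IH[of y s] yz rank_y Suc by auto
    consider "p = s" | "p < s" "k = r" | "p < s" "k < r" using p k_le by linarith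
    then show ?thesis
    proof cases
      case 1
      then have "y = 2 ^ r" using p Suc by simp
      then have "z = 2 ^ k"
        using sum_generated_below_two_power[OF J yz(1,2,4)] rank_y unfolding k_def by simp
      then show ?thesis using yz \<open>y = 2 ^ r\<close> k_le by auto
    next
      case 2
      have "\<not> z < y" using rank_in_strict_mono[OF fin yz(2), of y] rank_y 2 unfolding k_def by auto
      then have "z = y" using yz(4) by simp
      then show ?thesis using yz p Suc by (intro exI[of _ "Suc p"]) auto
    next
      case 3
      then obtain t where t: "s = Suc t" using p by (cases s) auto
      have y_t: "y = 2 ^ (t + 1) + 2 ^ p" "p \<le> t" using p 3 t by auto
      have "2 ^ (t + 2) < 2 ^ (t + 1) + 2 ^ p + z" using less.prems(3) Suc t yz(3) y_t(1) by simp
      from small_summand_bound[OF y_t(2) this z_bound] 3 Suc t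
      have "k = Suc t" "2 ^ t < z" by simp_all
      then obtain q where q: "q \<le> t" "z = 2 ^ t + 2 ^ q"
        using less.IH[of z t] yz \<open>2 ^ t < z\<close> unfolding k_def by auto
      have "2 ^ (t + 2) < 2 ^ (t + 1) + 2 ^ p + 2 ^ t + (2::nat) ^ q"
        using less.prems(3) Suc t yz(3) y_t(1) q(2) by simp
      then obtain m where "m \<le> t" "x = 2 ^ (t + 2) + 2 ^ m"
        using four_two_powers_exceed[OF y_t(2) q(1)] yz(3) y_t(1) q(2) by auto
      then show ?thesis using Suc t by (intro exI[of _ m]) auto
    qed
  qed
qed

lemma sum_generated_large_element:
  assumes J: "sum_generated J" "x \<in> J" and card: "card J < n" and large: "2 ^ (n - 3) < x"
  shows "\<exists>p\<le>n - 3. x = 2 ^ (n - 3) + 2 ^ p"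
proof -
  have fin: "finite J" using J(1) unfolding sum_generated_def by blast
  have "rank_in J x < n - 1" using rank_in_less_card[OF fin J(2)] card by simp
  moreover have "n - 3 < rank_in J x"
  proof -
    have "(2::nat) ^ (n - 3) < 2 ^ rank_in J x"
      using large sum_generated_le_two_power_rank[OF J] by (rule less_le_trans)
    then show ?thesis by (rule power_less_imp_less_exp[rotated]) simp
  qed
  ultimately have "rank_in J x = Suc (n - 3)" by simp
  then show ?thesis using sum_generated_above_half_power[OF J(1,2)] large by blast
qed

lemma sum_generated_le_two_power:
  assumes J: "sum_generated J" "x \<in> J" and card: "card J < n"
  shows "x \<le> 2 ^ (n - 2)"
proof -
  have "rank_in J x \<le> n - 2"
    using rank_in_less_card[of J x] J card unfolding sum_generated_def by simp
  then have "(2::nat) ^ rank_in J x \<le> 2 ^ (n - 2)" by (rule power_increasing) simp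
  then show ?thesis using sum_generated_le_two_power_rank[OF J] by (rule order_trans[rotated])
qed

locale unital_algebra =
  fixes scl :: "'f::field \<Rightarrow> 'a::ab_group_add \<Rightarrow> 'a"
    and mult :: "'a \<Rightarrow> 'a \<Rightarrow> 'a" and e :: 'a
  assumes unital_fd_algebra: "unital_fd_algebra scl mult e"
begin

sublocale vs: vector_space scl
  using unital_fd_algebra unfolding unital_fd_algebra_def by blast

definition basis :: "'a set" where
  "basis = (SOME B. vs.independent B \<and> vs.span B = UNIV)"

sublocale vs: finite_dimensional_vector_space scl basis
proof -
  obtain B0 where B0: "finite B0" "vs.span B0 = UNIV"
    using unital_fd_algebra unfolding unital_fd_algebra_def by blast
  obtain B where "vs.independent B" "UNIV \<subseteq> vs.span B"
    using vs.basis_exists[of UNIV] by blast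
  then have "\<exists>B. vs.independent B \<and> vs.span B = UNIV" by blast
  from someI_ex[OF this, folded basis_def]
  have basis: "vs.independent basis" "vs.span basis = UNIV" by blast+
  moreover have "finite basis" using vs.independent_span_bound[OF B0(1) basis(1)] B0(2) by simp
  ultimately show "finite_dimensional_vector_space scl basis"
    by unfold_locales
qed

lemma linear_mult_left: "Vector_Spaces.linear scl scl (\<lambda>x. mult x y)"
  using unital_fd_algebra unfolding unital_fd_algebra_def Vector_Spaces.linear_iff by blast

lemma linear_mult_right: "Vector_Spaces.linear scl scl (\<lambda>y. mult x y)"
  using unital_fd_algebra unfolding unital_fd_algebra_def Vector_Spaces.linear_iff by blast

lemma mult_unit_left [simp]: "mult e x = x"
  and mult_unit_right [simp]: "mult x e = x"
  using unital_fd_algebra unfolding unital_fd_algebra_def by blast+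

lemma mult_mem_span_products:
  assumes "x \<in> vs.span X" "y \<in> vs.span Y"
  shows "mult x y \<in> vs.span {mult u v | u v. u \<in> X \<and> v \<in> Y}"
proof -
  let ?P = "vs.span {mult u v | u v. u \<in> X \<and> v \<in> Y}"
  have "mult u y \<in> ?P" if "u \<in> X" for u
  proof -
    have "mult u y \<in> mult u ` vs.span Y" using assms(2) by (rule imageI)
    also have "\<dots> = vs.span (mult u ` Y)"
      by (rule module_hom.span_image[OF linear_mult_right[THEN module_hom_linearI], symmetric])
    also have "\<dots> \<subseteq> ?P" using that by (intro vs.span_mono) blast
    finally show ?thesis .
  qed
  then have "vs.span ((\<lambda>u. mult u y) ` X) \<subseteq> ?P"
    by (intro vs.span_minimal vs.subspace_span) blast
  moreover have "mult x y \<in> (\<lambda>u. mult u y) ` vs.span X" using assms(1) by (rule imageI)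
  then have "mult x y \<in> vs.span ((\<lambda>u. mult u y) ` X)"
    by (subst module_hom.span_image[OF linear_mult_left[THEN module_hom_linearI]])
  ultimately show ?thesis by blast
qed

lemma unit_nonzero:
  assumes "vs.dim (UNIV :: 'a set) \<noteq> 0" shows "e \<noteq> 0"
proof
  assume "e = 0"
  have "x = (0 :: 'a)" for x
  proof -
    have "x = mult e x" by simp
    also have "\<dots> = 0"
      using \<open>e = 0\<close> module_hom.zero[OF linear_mult_left[THEN module_hom_linearI]] by simp
    finally show ?thesis .
  qed
  then have "(UNIV :: 'a set) \<subseteq> {0}" by blast
  then have "vs.dim (UNIV :: 'a set) = 0" by (simp only: vs.dim_eq_0)
  with assms show False by contradiction
qed

abbreviation L :: "'a set \<Rightarrow> nat \<Rightarrow> 'a set" where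
  "L S k \<equiv> Lspan scl mult e S k"

lemma word_zero_length: "word mult e S 0 w \<Longrightarrow> w = e"
  by (erule word.cases) auto

lemma word_mem_Lspan: "word mult e S j w \<Longrightarrow> j \<le> k \<Longrightarrow> w \<in> L S k"
  unfolding Lspan_def by (intro vs.span_base) auto

lemma Lspan_mono: "i \<le> k \<Longrightarrow> L S i \<subseteq> L S k"
  unfolding Lspan_def by (intro vs.span_mono) (use le_trans in blast)

lemma Lspan_mult:
  assumes "x \<in> L S i" "y \<in> L S j" shows "mult x y \<in> L S (i + j)"
proof -
  have products: "mult u v \<in> L S (i + j)"
    if u: "word mult e S a u" "a \<le> i" and v: "word mult e S b v" "b \<le> j" for a b u v
  proof -
    consider "a = 0" | "b = 0" | "1 \<le> a" "1 \<le> b" by linarith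
    then show ?thesis
    proof cases
      case 1
      then have "u = e" using u(1) word_zero_length by blast
      then show ?thesis using v by (simp add: word_mem_Lspan)
    next
      case 2
      then have "v = e" using v(1) word_zero_length by blast
      then show ?thesis using u by (simp add: word_mem_Lspan)
    next
      case 3
      then have "word mult e S (a + b) (mult u v)" using u v by (intro word_mult)
      then show ?thesis by (rule word_mem_Lspan) (use u(2) v(2) in simp)
    qed
  qed
  let ?P = "{mult u v | u v. u \<in> {w. \<exists>a\<le>i. word mult e S a w}
      \<and> v \<in> {w. \<exists>b\<le>j. word mult e S b w}}"
  have "?P \<subseteq> L S (i + j)" using products by blast
  then have "vs.span ?P \<subseteq> L S (i + j)" by (rule vs.span_minimal) (simp add: Lspan_def)
  then show ?thesis using mult_mem_span_products[OF assms[unfolded Lspan_def]] by blast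
qed

lemma Lspan_growth_splits:
  assumes "2 \<le> k" "L S k \<noteq> L S (k - 1)"
  shows "\<exists>i j. 1 \<le> i \<and> 1 \<le> j \<and> i + j = k
    \<and> L S i \<noteq> L S (i - 1) \<and> L S j \<noteq> L S (j - 1)"
proof (rule ccontr)
  assume no_split: "\<not> ?thesis"
  have long_word: "w \<in> L S (k - 1)" if w: "word mult e S k w" for w
  proof -
    obtain i j u v where uv: "word mult e S i u" "word mult e S j v" "1 \<le> i" "1 \<le> j"
      "k = i + j" "w = mult u v"
      using w assms(1) by (cases rule: word.cases) auto
    then consider "L S i = L S (i - 1)" | "L S j = L S (j - 1)" using no_split by blast
    then show ?thesis
    proof cases
      case 1
      then have "u \<in> L S (i - 1)" using word_mem_Lspan[OF uv(1)] by blast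
      from Lspan_mult[OF this word_mem_Lspan[OF uv(2) order_refl]]
      have "mult u v \<in> L S (i - 1 + j)" .
      then show ?thesis using uv by simp
    next
      case 2
      then have "v \<in> L S (j - 1)" using word_mem_Lspan[OF uv(2)] by blast
      from Lspan_mult[OF word_mem_Lspan[OF uv(1) order_refl] this]
      have "mult u v \<in> L S (i + (j - 1))" .
      then show ?thesis using uv by simp
    qed
  qed
  have "{w. \<exists>j\<le>k. word mult e S j w} \<subseteq> L S (k - 1)"
  proof clarify
    fix j w assume "j \<le> k" "word mult e S j w"
    then show "w \<in> L S (k - 1)"
      using long_word word_mem_Lspan[of S j w "k - 1"] by (cases "j = k") simp_all
  qed
  then have "L S k \<subseteq> L S (k - 1)" unfolding Lspan_def by (rule vs.span_minimal) simp
  then show False using assms(2) Lspan_mono[of "k - 1" k S] by auto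
qed

definition jumps :: "'a set \<Rightarrow> nat set" where
  "jumps S = {k. 1 \<le> k \<and> k \<le> set_length scl mult e S \<and> L S k \<noteq> L S (k - 1)}"

lemma sum_generated_jumps: "sum_generated (jumps S)"
proof -
  have "finite (jumps S)"
    by (rule finite_subset[of _ "{..set_length scl mult e S}"]) (auto simp: jumps_def)
  moreover have "\<exists>i\<in>jumps S. \<exists>j\<in>jumps S. k = i + j" if k: "k \<in> jumps S" "2 \<le> k" for k
  proof -
    obtain i j where "1 \<le> i" "1 \<le> j" "i + j = k" "L S i \<noteq> L S (i - 1)" "L S j \<noteq> L S (j - 1)"
      using Lspan_growth_splits[OF k(2)] k(1) unfolding jumps_def by blast
    moreover have "k \<le> set_length scl mult e S" using k(1) unfolding jumps_def by blast
    ultimately have "i \<in> jumps S" "j \<in> jumps S" "k = i + j" unfolding jumps_def by auto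
    then show ?thesis by blast
  qed
  moreover have "0 \<notin> jumps S" unfolding jumps_def by simp
  ultimately show ?thesis unfolding sum_generated_def by blast
qed

lemma Lspan_eq_UNIV_ex:
  assumes "gen_set scl mult e S" shows "\<exists>k. L S k = UNIV"
proof -
  define W where "W = {w. \<exists>j. word mult e S j w}"
  have W: "vs.span W = UNIV" using assms by (simp add: gen_set_def W_def)
  obtain B where B: "B \<subseteq> W" "vs.independent B" "W \<subseteq> vs.span B"
    using vs.basis_exists[of W] by metis
  define len where "len b = (SOME j. word mult e S j b)" for b
  have len: "word mult e S (len b) b" if "b \<in> B" for b
  proof -
    have "\<exists>j. word mult e S j b" using B(1) that unfolding W_def by blast
    then show ?thesis unfolding len_def by (rule someI_ex)
  qed
  define k where "k = Max (len ` B)"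
  have "B \<subseteq> L S k"
  proof
    fix b assume b: "b \<in> B"
    have "len b \<le> k"
      unfolding k_def using vs.finiteI_independent[OF B(2)] b by simp
    with len[OF b] show "b \<in> L S k" by (rule word_mem_Lspan)
  qed
  then have "vs.span B \<subseteq> L S k" by (rule vs.span_minimal) (simp add: Lspan_def)
  moreover have "UNIV \<subseteq> vs.span B"
    using vs.span_mono[OF B(3)] unfolding W vs.span_span .
  ultimately show ?thesis by blast
qed

lemma Lspan_set_length:
  assumes "gen_set scl mult e S"
  shows "L S (set_length scl mult e S) = UNIV"
  unfolding set_length_def by (rule LeastI_ex[OF Lspan_eq_UNIV_ex[OF assms]])

lemma set_length_mem_jumps:
  assumes "gen_set scl mult e S" "0 < set_length scl mult e S"
  shows "set_length scl mult e S \<in> jumps S"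
proof -
  have "L S (set_length scl mult e S - 1) \<noteq> UNIV"
    using assms(2) unfolding set_length_def by (intro not_less_Least) simp
  then show ?thesis using Lspan_set_length[OF assms(1)] assms(2) unfolding jumps_def by simp
qed

lemma card_jumps_below_less_dim_Lspan:
  assumes "e \<noteq> 0"
  shows "card {j \<in> jumps S. j \<le> k} < vs.dim (L S k)"
proof (induction k)
  case 0
  have "{w. \<exists>j\<le>0. word mult e S j w} = {e}"
    by (auto intro: word_unit dest: word_zero_length)
  then have "vs.dim (L S 0) = 1" using assms by (simp add: Lspan_def)
  moreover have "{j \<in> jumps S. j \<le> 0} = {}" unfolding jumps_def by auto
  ultimately show ?case by simp
next
  case (Suc k)
  show ?case
  proof (cases "Suc k \<in> jumps S")
    case True
    then have "L S (Suc k) \<noteq> L S k" unfolding jumps_def by simp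
    with Lspan_mono[of k "Suc k" S] have "L S k \<subset> L S (Suc k)" by auto
    then have "vs.dim (L S k) < vs.dim (L S (Suc k))"
      by (intro vs.dim_psubset) (simp add: Lspan_def vs.span_span)
    moreover have "{j \<in> jumps S. j \<le> Suc k} = insert (Suc k) {j \<in> jumps S. j \<le> k}"
      using True by (auto simp: le_Suc_eq)
    ultimately show ?thesis using Suc.IH by simp
  next
    case False
    then have "{j \<in> jumps S. j \<le> Suc k} = {j \<in> jumps S. j \<le> k}" by (auto simp: le_Suc_eq)
    moreover have "vs.dim (L S k) \<le> vs.dim (L S (Suc k))"
      by (intro vs.dim_subset Lspan_mono) simp
    ultimately show ?thesis using Suc.IH by simp
  qed
qed

lemma card_jumps_less_dim:
  assumes "gen_set scl mult e S" "vs.dim (UNIV :: 'a set) \<noteq> 0"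
  shows "card (jumps S) < vs.dim (UNIV :: 'a set)"
proof -
  have "{j \<in> jumps S. j \<le> set_length scl mult e S} = jumps S"
    unfolding jumps_def by blast
  then show ?thesis
    using card_jumps_below_less_dim_Lspan[OF unit_nonzero[OF assms(2)],
        of S "set_length scl mult e S"]
    by (simp only: Lspan_set_length[OF assms(1)])
qed

lemma gen_set_basis: "gen_set scl mult e basis"
proof -
  have "basis \<subseteq> {w. \<exists>j. word mult e basis j w}"
  proof
    fix b assume "b \<in> basis"
    then have "word mult e basis 1 b" by (rule word_gen)
    then show "b \<in> {w. \<exists>j. word mult e basis j w}" by blast
  qed
  from vs.span_mono[OF this] have "vs.span {w. \<exists>j. word mult e basis j w} = UNIV"
    by (simp add: vs.span_Basis top_unique)
  then show ?thesis unfolding gen_set_def using vs.finite_Basis by simp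
qed

lemma alg_length_attained:
  assumes "vs.dim (UNIV :: 'a set) \<noteq> 0"
  obtains S where "gen_set scl mult e S" "alg_length scl mult e = set_length scl mult e S"
proof -
  define G where "G = {set_length scl mult e S | S. gen_set scl mult e S}"
  have "set_length scl mult e S \<le> 2 ^ (vs.dim (UNIV :: 'a set) - 2)"
    if "gen_set scl mult e S" for S
  proof (cases "set_length scl mult e S = 0")
    case False
    then show ?thesis
      using sum_generated_le_two_power[OF sum_generated_jumps set_length_mem_jumps
          card_jumps_less_dim] that assms by simp
  qed simp
  then have "finite G" unfolding G_def by (intro finite_subset[OF _ finite_atMost]) auto
  moreover have "G \<noteq> {}" unfolding G_def using gen_set_basis by blast
  ultimately have "alg_length scl mult e \<in> G" unfolding alg_length_def G_def[symmetric] by (rule Max_in)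
  then show ?thesis using that unfolding G_def by blast
qed

end

theorem corollary4p7:
  fixes scl :: "'f::field \<Rightarrow> 'a::ab_group_add \<Rightarrow> 'a"
    and mult :: "'a \<Rightarrow> 'a \<Rightarrow> 'a" and e :: 'a and n :: nat
  assumes "unital_fd_algebra scl mult e"
    and "vector_space.dim scl (UNIV :: 'a set) = n"
    and "n > 4"
    and "alg_length scl mult e > 2 ^ (n - 3)"
  shows "\<exists>p\<le>n - 3. alg_length scl mult e = 2 ^ (n - 3) + 2 ^ p"
proof -
  interpret unital_algebra scl mult e by (rule unital_algebra.intro) fact
  have dim: "vs.dim (UNIV :: 'a set) \<noteq> 0" using assms(2,3) by simp
  obtain S where S: "gen_set scl mult e S" "alg_length scl mult e = set_length scl mult e S"
    using alg_length_attained[OF dim] by blast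
  have "set_length scl mult e S \<in> jumps S"
    using set_length_mem_jumps[OF S(1)] S(2) assms(4) by simp
  with S show ?thesis
    using sum_generated_large_element[OF sum_generated_jumps _ card_jumps_less_dim[OF S(1) dim]]
      assms(2,4) by simp
qed

end
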